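(* Let $N\ge 1$, $h,\varepsilon\in(0,1)$, and let $V=(v_1,\dots,v_N)\in[-1,1]^N$ satisfy $v_1\le v_2\le\dots\le v_N$. For $k=1,\dots,N$ let $J(v_k)=\{l\in\{1,\dots,N\}: |v_l-v_k|\le\varepsilon\}$, let $I(v_k)$ be its cardinality, and set $$\Delta_k=\frac{h}{I(v_k)}\sum_{l\in J(v_k)} v_l .$$ Then $\Delta_{k+1}\ge \Delta_k$ for $k=1,\dots,N-1$.
   Context: $\Delta_k=w_k(V)-v_k$, where $w_k(V)=v_k+\frac{h}{I(v_k)}\sum_{l\in J(v_k)}v_l$ is the unclipped update of the opinion model. *)

theory Defs
  imports Main Complex_Main
begin

definition J :: "nat \<Rightarrow> real \<Rightarrow> (nat \<Rightarrow> real) \<Rightarrow> nat \<Rightarrow> nat set" where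
  "J N \<epsilon> v k = {l \<in> {1..N}. \<bar>v l - v k\<bar> \<le> \<epsilon>}"

definition I :: "nat \<Rightarrow> real \<Rightarrow> (nat \<Rightarrow> real) \<Rightarrow> nat \<Rightarrow> nat" where
  "I N \<epsilon> v k = card (J N \<epsilon> v k)"

definition Delta :: "nat \<Rightarrow> real \<Rightarrow> real \<Rightarrow> (nat \<Rightarrow> real) \<Rightarrow> nat \<Rightarrow> real" where
  "Delta N h \<epsilon> v k = h / real (I N \<epsilon> v k) * (\<Sum>l\<in>J N \<epsilon> v k. v l)"

end

theory Submission
  imports Defs
begin

text \<open>Moving from v k to a larger
  value v k' only removes opinions lying below the new neighbourhood and only adds opinions
  lying above the old one, so the mean cannot decrease. Only v k \<le> v (k + 1) is needed, not
  the global ordering of the profile.\<close>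

lemma sum_product_diff:
  fixes f :: "'a \<Rightarrow> 'b::comm_ring_1"
  shows "(\<Sum>(a, b)\<in>A \<times> B. f b - f a) = of_nat (card A) * sum f B - of_nat (card B) * sum f A"
  by (simp add: sum.cartesian_product[symmetric] sum_subtractf sum_distrib_left
      sum_distrib_right mult.commute)

lemma card_mult_sum_le_card_mult_sum:
  fixes f :: "'a \<Rightarrow> 'b::linordered_idom"
  assumes "finite A" "finite B"
    and "\<And>a b. a \<in> A \<Longrightarrow> b \<in> B \<Longrightarrow> a \<notin> B \<or> b \<notin> A \<Longrightarrow> f a \<le> f b"
  shows "of_nat (card B) * sum f A \<le> of_nat (card A) * sum f B"
proof -
  let ?C = "A \<inter> B"
  let ?g = "\<lambda>(a, b). f b - f a"
  have "?C \<times> ?C \<subseteq> A \<times> B" by auto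
  then have "sum ?g (A \<times> B) = sum ?g (?C \<times> ?C) + sum ?g (A \<times> B - ?C \<times> ?C)"
    using assms(1,2) by (simp add: sum.subset_diff)
  also have "sum ?g (?C \<times> ?C) = 0"
    by (simp only: sum_product_diff)
  finally have "sum ?g (A \<times> B) = sum ?g (A \<times> B - ?C \<times> ?C)" by simp
  also have "\<dots> \<ge> 0"
    using assms(3) by (intro sum_nonneg) fastforce
  finally have "sum ?g (A \<times> B) \<ge> 0" .
  then show ?thesis by (simp only: sum_product_diff)
qed

lemma mean_le_mean:
  fixes f :: "'a \<Rightarrow> 'b::linordered_field"
  assumes "finite A" "finite B" "A \<noteq> {}" "B \<noteq> {}"
    and "\<And>a b. a \<in> A \<Longrightarrow> b \<in> B \<Longrightarrow> a \<notin> B \<or> b \<notin> A \<Longrightarrow> f a \<le> f b"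
  shows "sum f A / of_nat (card A) \<le> sum f B / of_nat (card B)"
proof -
  have "of_nat (card A) > (0::'b)" "of_nat (card B) > (0::'b)"
    using assms(1-4) by (simp_all add: card_gt_0_iff)
  moreover have "of_nat (card B) * sum f A \<le> of_nat (card A) * sum f B"
    using assms(1,2,5) by (rule card_mult_sum_le_card_mult_sum)
  ultimately show ?thesis
    by (simp add: divide_simps mult.commute)
qed

lemma J_crossing_le:
  assumes "v k \<le> v k'"
    and "a \<in> J N \<epsilon> v k" "b \<in> J N \<epsilon> v k'" "a \<notin> J N \<epsilon> v k' \<or> b \<notin> J N \<epsilon> v k"
  shows "v a \<le> v b"
  using assms unfolding J_def by auto

lemma self_mem_J:
  assumes "k \<in> {1..N}" "0 \<le> \<epsilon>"
  shows "k \<in> J N \<epsilon> v k"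
  using assms unfolding J_def by simp

lemma Delta_mono:
  assumes "0 \<le> h" "0 \<le> \<epsilon>" "k \<in> {1..N}" "k' \<in> {1..N}" "v k \<le> v k'"
  shows "Delta N h \<epsilon> v k \<le> Delta N h \<epsilon> v k'"
proof -
  have "finite (J N \<epsilon> v i)" for i
    unfolding J_def by simp
  moreover have "J N \<epsilon> v k \<noteq> {}" "J N \<epsilon> v k' \<noteq> {}"
    using self_mem_J assms(2-4) by blast+
  ultimately have "sum v (J N \<epsilon> v k) / card (J N \<epsilon> v k)
      \<le> sum v (J N \<epsilon> v k') / card (J N \<epsilon> v k')"
    using J_crossing_le[OF assms(5)] by (intro mean_le_mean) auto
  then have "h * (sum v (J N \<epsilon> v k) / card (J N \<epsilon> v k))
      \<le> h * (sum v (J N \<epsilon> v k') / card (J N \<epsilon> v k'))"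
    using assms(1) by (rule mult_left_mono)
  then show ?thesis
    unfolding Delta_def I_def by simp
qed

theorem lemma2:
  fixes N :: nat and h \<epsilon> :: real and v :: "nat \<Rightarrow> real"
  assumes "N \<ge> 1"
    and "0 < h" "h < 1" "0 < \<epsilon>" "\<epsilon> < 1"
    and "\<And>k. k \<in> {1..N} \<Longrightarrow> v k \<in> {-1..1}"
    and "\<And>k. 1 \<le> k \<Longrightarrow> k < N \<Longrightarrow> v k \<le> v (k + 1)"
  shows "\<forall>k\<in>{1..N-1}. Delta N h \<epsilon> v (k + 1) \<ge> Delta N h \<epsilon> v k"
proof
  fix k assume "k \<in> {1..N-1}"
  then have "k \<in> {1..N}" "k + 1 \<in> {1..N}" "v k \<le> v (k + 1)"
    using assms(7) by auto
  then show "Delta N h \<epsilon> v (k + 1) \<ge> Delta N h \<epsilon> v k"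
    using assms(2,4) by (intro Delta_mono) auto
qed

end
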